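(* Let $f:[0,\infty)\to[0,\infty)$ be continuous, and let $\varphi=\frac{\sqrt5+1}{2}$. Then the following are equivalent: (a) $f(f(x))=x\,f(x)$ for all $x\ge 0$; (b) either $f(x)=0$ for all $x\ge 0$, or $f(x)=x^{\varphi}$ for all $x\ge 0$. *)

theory Defs
  imports "HOL-Analysis.Analysis"
begin

end

theory Submission
  imports Defs
begin

text \<open>
  A solution that is not identically zero is positive on \<open>(0,\<infinity>)\<close>: where \<open>f\<close> is
  positive the equation makes it injective, and with the intermediate value theorem this
  forbids zeros at positive points. Hence \<open>f\<close> is a strictly increasing bijection of
  \<open>(0,\<infinity>)\<close> fixing \<open>1\<close>. For \<open>x > 0\<close> take a backward orbit \<open>s\<^sub>0 = f x\<close>,
  \<open>f s\<^sub>n\<^sub>+\<^sub>1 = s\<^sub>n\<close> (so \<open>s\<^sub>1 = x\<close>); the equation at \<open>s\<^sub>n\<^sub>+\<^sub>2\<close> reads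
  \<open>s\<^sub>n = s\<^sub>n\<^sub>+\<^sub>1 s\<^sub>n\<^sub>+\<^sub>2\<close>. Thus \<open>l\<^sub>n = ln s\<^sub>n\<close> satisfies \<open>l\<^sub>n = l\<^sub>n\<^sub>+\<^sub>1 + l\<^sub>n\<^sub>+\<^sub>2\<close>,
  and it has constant sign because \<open>f\<close> preserves the side of \<open>1\<close>, so it is bounded.
  The solutions of this recurrence are combinations of \<open>\<phi>\<^sup>-\<^sup>n\<close> and \<open>(-\<phi>)\<^sup>n\<close>;
  boundedness kills the second, whence \<open>l\<^sub>1 = (\<phi> - 1) l\<^sub>0\<close>, i.e. \<open>ln (f x) = \<phi> ln x\<close>.
\<close>

definition golden_ratio :: real where
  "golden_ratio = (sqrt 5 + 1) / 2"

lemma golden_ratio_squared: "golden_ratio\<^sup>2 = golden_ratio + 1"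
  unfolding golden_ratio_def power2_eq_square by (simp add: field_simps)

lemma golden_ratio_times_pred: "golden_ratio * (golden_ratio - 1) = 1"
  using golden_ratio_squared by (simp add: algebra_simps power2_eq_square)

lemma golden_ratio_bounds: "1 < golden_ratio" "golden_ratio < 2"
proof -
  have "2 < sqrt 5" by (simp add: real_less_rsqrt)
  moreover have "sqrt 5 < 3" using real_sqrt_less_mono[of 5 9] by simp
  ultimately show "1 < golden_ratio" "golden_ratio < 2"
    unfolding golden_ratio_def by simp_all
qed

lemma powr_golden_ratio_iterate:
  fixes x :: real
  assumes "0 \<le> x"
  shows "(x powr golden_ratio) powr golden_ratio = x * x powr golden_ratio"
proof (cases "x = 0")
  case False
  then have "(x powr golden_ratio) powr golden_ratio = x powr (golden_ratio + 1)"
    by (simp add: powr_powr golden_ratio_squared flip: power2_eq_square)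
  also have "\<dots> = x * x powr golden_ratio"
    using assms False by (simp add: powr_add)
  finally show ?thesis .
qed simp

lemma nonneg_backward_fibonacci_ratio:
  fixes l :: "nat \<Rightarrow> real"
  assumes recurrence: "\<And>n. l n = l (Suc n) + l (Suc (Suc n))"
    and nonneg: "\<And>n. 0 \<le> l n"
  shows "l 1 = (golden_ratio - 1) * l 0"
proof -
  have bounded: "l n \<le> l 0" for n
  proof (induction n)
    case (Suc n)
    then show ?case using recurrence[of n] nonneg[of "Suc (Suc n)"] by linarith
  qed simp
  \<comment> \<open>\<open>q\<close> is the coefficient of the \<open>(-\<phi>)\<^sup>n\<close> mode of the recurrence\<close>
  define q where "q n = l (Suc n) - (golden_ratio - 1) * l n" for n
  have q_step: "q (Suc n) = - golden_ratio * q n" for n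
  proof -
    have "golden_ratio * ((golden_ratio - 1) * l n) = l n"
      by (simp flip: mult.assoc add: golden_ratio_times_pred)
    moreover have "q (Suc n) = l n - golden_ratio * l (Suc n)"
      unfolding q_def using recurrence[of n] by (simp add: algebra_simps)
    ultimately show ?thesis
      unfolding q_def by (simp add: right_diff_distrib)
  qed
  have q_power: "q n = (- golden_ratio) ^ n * q 0" for n
    by (induction n) (simp_all add: q_step)
  have q_bounded: "\<bar>q n\<bar> \<le> l 0" for n
  proof -
    have "0 \<le> (golden_ratio - 1) * l n" "(golden_ratio - 1) * l n \<le> l n"
      using golden_ratio_bounds nonneg[of n] mult_left_le_one_le[of "l n" "golden_ratio - 1"]
      by simp_all
    then show ?thesis
      unfolding q_def using nonneg[of "Suc n"] bounded[of n] bounded[of "Suc n"] by linarith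
  qed
  have "q 0 = 0"
  proof (rule ccontr)
    assume "q 0 \<noteq> 0"
    obtain n where "l 0 / \<bar>q 0\<bar> < golden_ratio ^ n"
      using real_arch_pow[OF golden_ratio_bounds(1)] by blast
    then have "l 0 < golden_ratio ^ n * \<bar>q 0\<bar>"
      using \<open>q 0 \<noteq> 0\<close> by (simp add: pos_divide_less_eq)
    also have "\<dots> = \<bar>q n\<bar>"
      using golden_ratio_bounds by (simp add: q_power[of n] abs_mult power_abs)
    finally show False using q_bounded[of n] by simp
  qed
  then show ?thesis unfolding q_def by simp
qed

lemma backward_fibonacci_ratio:
  fixes l :: "nat \<Rightarrow> real"
  assumes recurrence: "\<And>n. l n = l (Suc n) + l (Suc (Suc n))"
    and constant_sign: "(\<forall>n. 0 \<le> l n) \<or> (\<forall>n. l n \<le> 0)"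
  shows "l 1 = (golden_ratio - 1) * l 0"
  using constant_sign
proof
  assume "\<forall>n. 0 \<le> l n"
  then show ?thesis using nonneg_backward_fibonacci_ratio[of l, OF recurrence] by blast
next
  assume nonpos: "\<forall>n. l n \<le> 0"
  have "- l 1 = (golden_ratio - 1) * - l 0"
  proof (rule nonneg_backward_fibonacci_ratio[of "\<lambda>n. - l n"])
    show "- l n = - l (Suc n) + - l (Suc (Suc n))" for n
      using recurrence[of n] by simp
    show "0 \<le> - l n" for n
      using nonpos by simp
  qed
  then show ?thesis by simp
qed

locale ffx_eq_xfx =
  fixes f :: "real \<Rightarrow> real"
  assumes cont: "continuous_on {0..} f"
    and nonneg: "\<And>x. 0 \<le> x \<Longrightarrow> 0 \<le> f x"
    and fun_eq: "\<And>x. 0 \<le> x \<Longrightarrow> f (f x) = x * f x"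
begin

lemma continuous_on_atLeastAtMost: "0 \<le> a \<Longrightarrow> continuous_on {a..b} f"
  by (rule continuous_on_subset[OF cont]) auto

lemma f_0: "f 0 = 0"
proof -
  have "f (f 0) = 0" using fun_eq[of 0] by simp
  moreover have "f (f (f 0)) = f 0 * f (f 0)" by (rule fun_eq[OF nonneg]) simp
  ultimately show ?thesis by simp
qed

lemma eq_if_same_positive_value:
  assumes "0 \<le> x" "0 \<le> y" "f x = f y" "0 < f x"
  shows "x = y"
proof -
  have "x * f x = y * f x" using fun_eq[OF assms(1)] fun_eq[OF assms(2)] assms(3) by metis
  then show ?thesis using assms(4) by simp
qed

lemma attains_values_below:
  assumes "0 \<le> a" "0 \<le> y" "y \<le> f a"
  obtains t where "0 \<le> t" "t \<le> a" "f t = y"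
  using IVT'[of f 0 y a] continuous_on_atLeastAtMost[of 0 a] assms f_0 by auto

lemma no_positive_value_between_zeros:
  assumes "0 \<le> a" "a < b" "b < c" "f a = 0" "f c = 0"
  shows "f b = 0"
proof (rule ccontr)
  assume "f b \<noteq> 0"
  then have fb_pos: "0 < f b" using nonneg[of b] assms by simp
  define v where "v = f b / 2"
  obtain t1 where t1: "a \<le> t1" "t1 \<le> b" "f t1 = v"
    using IVT'[of f a v b] continuous_on_atLeastAtMost[of a b] assms fb_pos
    unfolding v_def by auto
  obtain t2 where t2: "b \<le> t2" "t2 \<le> c" "f t2 = v"
    using IVT2'[of f c v b] continuous_on_atLeastAtMost[of b c] assms fb_pos
    unfolding v_def by auto
  have "t1 = t2"
    using eq_if_same_positive_value[of t1 t2] t1 t2 assms fb_pos unfolding v_def by auto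
  then have "t1 = b" using t1 t2 by simp
  then show False using t1 fb_pos unfolding v_def by simp
qed

end

locale nontrivial_ffx_eq_xfx = ffx_eq_xfx +
  assumes nontrivial: "\<exists>a\<ge>0. f a \<noteq> 0"
begin

text \<open>
  If \<open>f\<close> vanished at some \<open>x > 0\<close>, it would vanish on \<open>[0,x]\<close>; but a small positive
  \<open>y = f t\<close> in that interval would have \<open>f y = t y \<noteq> 0\<close>.
\<close>
lemma f_pos: "0 < x \<Longrightarrow> 0 < f x"
proof (rule ccontr)
  assume "0 < x" "\<not> 0 < f x"
  then have fx: "f x = 0" using nonneg[of x] by simp
  obtain a where a: "0 \<le> a" "0 < f a" using nontrivial nonneg by force
  define y where "y = min x (f a)"
  have y: "0 < y" "y \<le> x" "y \<le> f a" using \<open>0 < x\<close> a unfolding y_def by auto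
  obtain t where t: "0 \<le> t" "f t = y" using attains_values_below[OF a(1), of y] y by auto
  have "f y = 0"
  proof (cases "y = x")
    case False
    then show ?thesis using no_positive_value_between_zeros[of 0 y x] y f_0 fx by simp
  qed (use fx in simp)
  moreover have "f y = t * y" using fun_eq[OF t(1)] t(2) by simp
  ultimately have "t = 0" using y by simp
  then show False using t y f_0 by simp
qed

lemma strict_mono_on_nonneg: "strict_mono_on {0..} f"
proof (rule strict_mono_onI)
  fix x y :: real
  assume "x \<in> {0..}" "y \<in> {0..}" "x < y"
  then have xy: "0 \<le> x" "x < y" by auto
  show "f x < f y"
  proof (rule ccontr)
    assume "\<not> f x < f y"
    moreover have "0 < f y" using f_pos xy by simp
    ultimately obtain t where "0 \<le> t" "t \<le> x" "f t = f y"
      using attains_values_below[OF xy(1), of "f y"] by force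
    then have "t = y" using eq_if_same_positive_value[of t y] \<open>0 < f y\<close> xy by simp
    then show False using \<open>t \<le> x\<close> xy by simp
  qed
qed

lemma f_1: "f 1 = 1"
  using eq_if_same_positive_value[of "f 1" 1] fun_eq[of 1] nonneg[of 1] f_pos[of 1] by simp

lemma one_le_f_iff: "0 \<le> x \<Longrightarrow> 1 \<le> f x \<longleftrightarrow> 1 \<le> x"
  using strict_mono_on_less_eq[OF strict_mono_on_nonneg, of 1 x] f_1 by simp

lemma f_le_one_iff: "0 \<le> x \<Longrightarrow> f x \<le> 1 \<longleftrightarrow> x \<le> 1"
  using strict_mono_on_less_eq[OF strict_mono_on_nonneg, of x 1] f_1 by simp

lemma attains_positive_values: "0 < y \<Longrightarrow> \<exists>t>0. f t = y"
proof -
  assume "0 < y"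
  obtain z where z: "1 \<le> z" "y \<le> z" by (meson linear order_refl)
  have "1 \<le> f z" using one_le_f_iff z by simp
  then have "z \<le> f (f z)" using fun_eq[of z] z by (simp add: mult_le_cancel_left1)
  then obtain t where "0 \<le> t" "f t = y"
    using attains_values_below[of "f z" y] nonneg[of z] \<open>0 < y\<close> z by auto
  then show ?thesis using \<open>0 < y\<close> f_0 by (metis less_eq_real_def)
qed

lemma backward_orbit:
  assumes "0 < y"
  obtains s where "s 0 = y" "\<And>n. 0 < s n" "\<And>n. f (s (Suc n)) = s n"
proof -
  obtain g where g: "\<And>y. 0 < y \<Longrightarrow> 0 < g y \<and> f (g y) = y"
    using attains_positive_values by metis
  define s where "s n = (g ^^ n) y" for n
  have s_pos: "0 < s n" for n
    by (induction n) (simp_all add: s_def assms g)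
  show ?thesis
  proof
    show "s 0 = y" by (simp add: s_def)
    show "0 < s n" for n by (rule s_pos)
    show "f (s (Suc n)) = s n" for n using g[OF s_pos[of n]] by (simp add: s_def)
  qed
qed

lemma backward_orbit_one_side:
  assumes s_pos: "\<And>n. 0 < s n" and s_step: "\<And>n. f (s (Suc n)) = s n"
  shows "(\<forall>n. 1 \<le> s n) \<or> (\<forall>n. s n \<le> 1)"
proof (cases "1 \<le> s 0")
  case True
  have "1 \<le> s n" for n
  proof (induction n)
    case (Suc n)
    then show ?case using one_le_f_iff[of "s (Suc n)"] s_step[of n] s_pos[of "Suc n"] by simp
  qed (use True in simp)
  then show ?thesis by blast
next
  case False
  have "s n \<le> 1" for n
  proof (induction n)
    case (Suc n)
    then show ?case using f_le_one_iff[of "s (Suc n)"] s_step[of n] s_pos[of "Suc n"] by simp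
  qed (use False in simp)
  then show ?thesis by blast
qed

lemma ln_f_eq:
  assumes "0 < x"
  shows "ln (f x) = golden_ratio * ln x"
proof -
  obtain s where s0: "s 0 = f x" and s_pos: "\<And>n. 0 < s n"
    and s_step: "\<And>n. f (s (Suc n)) = s n"
    using backward_orbit[OF f_pos[OF assms]] by blast
  have "f (s 1) = f x" using s_step[of 0] s0 by simp
  moreover from this have "0 < f (s 1)" using f_pos[OF assms] by simp
  ultimately have s1: "s 1 = x"
    by (rule eq_if_same_positive_value[OF less_imp_le[OF s_pos] less_imp_le[OF assms]])
  have s_product: "s n = s (Suc (Suc n)) * s (Suc n)" for n
    using fun_eq[OF less_imp_le[OF s_pos[of "Suc (Suc n)"]]] by (simp only: s_step)
  define l where "l n = ln (s n)" for n
  have l_recurrence: "l n = l (Suc n) + l (Suc (Suc n))" for n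
    unfolding l_def s_product[of n] using s_pos[of "Suc n"] s_pos[of "Suc (Suc n)"]
    by (simp add: ln_mult)
  have "(\<forall>n. 0 \<le> l n) \<or> (\<forall>n. l n \<le> 0)"
    using backward_orbit_one_side[of s, OF s_pos s_step] s_pos unfolding l_def by auto
  then have "l 1 = (golden_ratio - 1) * l 0"
    by (rule backward_fibonacci_ratio[of l, OF l_recurrence])
  then have "ln x = (golden_ratio - 1) * ln (f x)"
    using s0 s1 unfolding l_def by simp
  then show ?thesis
    by (simp flip: mult.assoc add: golden_ratio_times_pred)
qed

lemma eq_powr_golden_ratio: "0 \<le> x \<Longrightarrow> f x = x powr golden_ratio"
proof (cases "x = 0")
  case False
  assume "0 \<le> x"
  then have "0 < x" "0 < f x" using False f_pos by auto
  then have "f x = exp (golden_ratio * ln x)" by (metis exp_ln ln_f_eq)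
  then show ?thesis using \<open>0 < x\<close> by (simp add: powr_def)
qed (simp add: f_0)

end

theorem theorem2:
  fixes f :: "real \<Rightarrow> real"
  assumes cont: "continuous_on {0..} f"
    and nonneg: "\<And>x. x \<ge> 0 \<Longrightarrow> f x \<ge> 0"
  shows "(\<forall>x\<ge>0. f (f x) = x * f x) \<longleftrightarrow>
         ((\<forall>x\<ge>0. f x = 0) \<or> (\<forall>x\<ge>0. f x = x powr ((sqrt 5 + 1) / 2)))"
  unfolding golden_ratio_def[symmetric]
proof
  assume "\<forall>x\<ge>0. f (f x) = x * f x"
  then interpret ffx_eq_xfx f
    using cont nonneg by unfold_locales auto
  show "(\<forall>x\<ge>0. f x = 0) \<or> (\<forall>x\<ge>0. f x = x powr golden_ratio)"
  proof (cases "\<forall>x\<ge>0. f x = 0")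
    case False
    then interpret nontrivial_ffx_eq_xfx f
      by unfold_locales auto
    show ?thesis using eq_powr_golden_ratio by simp
  qed simp
next
  assume "(\<forall>x\<ge>0. f x = 0) \<or> (\<forall>x\<ge>0. f x = x powr golden_ratio)"
  then show "\<forall>x\<ge>0. f (f x) = x * f x"
    using powr_golden_ratio_iterate by auto
qed

end
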